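(* Let $\mathcal{P}(3^3)$ be the graph whose vertices are the partitions of $\{1,\ldots,9\}$ into three cells each of size three, two such partitions being adjacent if and only if each cell of one partition contains exactly one point from each cell of the other. Let $S$ be an independent set of size $70$ in $\mathcal{P}(3^3)$. If $\pi\in S$, then there are $36$ partitions $\sigma\in S$ such that the meet $\pi\wedge\sigma$ has $7$ cells, a further $18$ such that $\pi\wedge\sigma$ has $6$ cells, and $15$ such that $\pi\wedge\sigma$ has $5$ cells.
   Context: The meet $\pi\wedge\sigma$ of two partitions is the partition whose cells are the nonempty intersections of a cell of $\pi$ with a cell of $\sigma$. *)

theory Defs
  imports Main
begin

definition is_partition :: "'a set \<Rightarrow> 'a set set \<Rightarrow> bool" where
  "is_partition X P \<longleftrightarrow> (\<Union>P = X) \<and> (\<forall>c\<in>P. c \<noteq> {}) \<and>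
     (\<forall>c\<in>P. \<forall>d\<in>P. c \<noteq> d \<longrightarrow> c \<inter> d = {})"

definition P33 :: "nat set set set" where
  "P33 = {P. is_partition {1..9} P \<and> card P = 3 \<and> (\<forall>c\<in>P. card c = 3)}"

definition adj33 :: "nat set set \<Rightarrow> nat set set \<Rightarrow> bool" where
  "adj33 P Q \<longleftrightarrow> (\<forall>c\<in>P. \<forall>d\<in>Q. card (c \<inter> d) = 1) \<and> (\<forall>d\<in>Q. \<forall>c\<in>P. card (d \<inter> c) = 1)"

definition independent33 :: "nat set set set \<Rightarrow> bool" where
  "independent33 S \<longleftrightarrow> S \<subseteq> P33 \<and> (\<forall>P\<in>S. \<forall>Q\<in>S. \<not> adj33 P Q)"

definition meet :: "'a set set \<Rightarrow> 'a set set \<Rightarrow> 'a set set" where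
  "meet P Q = {c \<inter> d | c d. c \<in> P \<and> d \<in> Q \<and> c \<inter> d \<noteq> {}}"

end

theory Submission
  imports Defs "HOL-Library.List_Lexorder" "HOL-Combinatorics.Permutations"
begin

(* The graph P(3^3) has 280 vertices and relabelling the points 1..9 acts transitively on
   them, so every vertex has 36 neighbours, like the base partition
   pi0 = {{1,2,3},{4,5,6},{7,8,9}}. The neighbours of pi0 induce 12 disjoint triangles,
   hence an independent set contains at most 12 neighbours of any vertex. For |S| = 70 the
   70 * 36 edges between S and the 210 vertices outside S then force every vertex outside S
   to have exactly 12 neighbours in S.

   Move pi to pi0 and let n_k count the sigma in S - {pi0} whose meet with pi0 has k cells.
   Every such sigma has k in {5, 6, 7} and has 12, 4, 4 neighbours in common with pi0
   respectively, and only those with k = 7 have neighbours (four) among the 27 partitions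
   whose meet with pi0 has 5 cells. Counting the edges from S - {pi0} to the neighbours of
   pi0 gives 4 * 69 + 8 n_5 = 36 * 11, and counting those to the 27 partitions gives
   4 n_7 = 12 (27 - n_5). Hence n_5 = 15, n_7 = 36 and n_6 = 18. The finite facts about pi0
   are checked by evaluation over an explicit list of the 280 partitions. *)

section \<open>Cells, meets and adjacency\<close>

definition cell_of :: "'a set set \<Rightarrow> 'a \<Rightarrow> 'a set" where
  "cell_of P x = (THE c. c \<in> P \<and> x \<in> c)"

lemma cell_of_eq:
  assumes "is_partition X P" "c \<in> P" "x \<in> c"
  shows "cell_of P x = c"
  unfolding cell_of_def
proof (rule the_equality)
  show "c \<in> P \<and> x \<in> c" using assms by simp
next
  fix d assume "d \<in> P \<and> x \<in> d"
  then show "d = c" using assms unfolding is_partition_def by blast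
qed

lemma cell_of_in:
  assumes "is_partition X P" "x \<in> X"
  shows "cell_of P x \<in> P" "x \<in> cell_of P x"
proof -
  obtain c where "c \<in> P" "x \<in> c" using assms unfolding is_partition_def by blast
  then show "cell_of P x \<in> P" "x \<in> cell_of P x" using cell_of_eq[OF assms(1)] by auto
qed

lemma is_partition_remove_cell:
  assumes "is_partition X P" "c \<in> P"
  shows "is_partition (X - c) (P - {c})"
  using assms unfolding is_partition_def by blast

lemma meet_self:
  assumes "is_partition X P"
  shows "meet P P = P"
proof
  show "meet P P \<subseteq> P"
  proof
    fix m assume "m \<in> meet P P"
    then obtain c d where "c \<in> P" "d \<in> P" "c \<inter> d \<noteq> {}" "m = c \<inter> d"
      unfolding meet_def by blast
    moreover from this have "c = d" using assms unfolding is_partition_def by blast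
    ultimately show "m \<in> P" by simp
  qed
  show "P \<subseteq> meet P P"
    using assms unfolding is_partition_def meet_def by fastforce
qed

lemma mem_cell_iff:
  assumes "is_partition X P" "c \<in> P"
  shows "x \<in> c \<longleftrightarrow> x \<in> X \<and> cell_of P x = c"
proof
  assume "x \<in> c"
  then show "x \<in> X \<and> cell_of P x = c"
    using assms cell_of_eq[OF assms] unfolding is_partition_def by blast
next
  assume "x \<in> X \<and> cell_of P x = c"
  then show "x \<in> c" using cell_of_in(2)[OF assms(1)] by blast
qed

lemma card_meet_eq_card_cell_pairs:
  assumes P: "is_partition X P" and Q: "is_partition X Q"
  shows "card (meet P Q) = card ((\<lambda>x. (cell_of P x, cell_of Q x)) ` X)"
proof -
  let ?pair = "\<lambda>x. (cell_of P x, cell_of Q x)"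
  have cells: "cell_of P x \<in> P" "cell_of Q x \<in> Q" if "x \<in> X" for x
    using cell_of_in[OF P that] cell_of_in[OF Q that] by auto
  have "meet P Q = (\<lambda>(c, d). c \<inter> d) ` ?pair ` X"
  proof
    show "meet P Q \<subseteq> (\<lambda>(c, d). c \<inter> d) ` ?pair ` X"
    proof
      fix m assume "m \<in> meet P Q"
      then obtain c d x where "c \<in> P" "d \<in> Q" "x \<in> c \<inter> d" "m = c \<inter> d"
        unfolding meet_def by blast
      moreover from this have "x \<in> X" "?pair x = (c, d)"
        using mem_cell_iff[OF P] mem_cell_iff[OF Q] by auto
      ultimately show "m \<in> (\<lambda>(c, d). c \<inter> d) ` ?pair ` X" by force
    qed
    show "(\<lambda>(c, d). c \<inter> d) ` ?pair ` X \<subseteq> meet P Q"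
    proof clarify
      fix x assume "x \<in> X"
      then have "x \<in> cell_of P x \<inter> cell_of Q x"
        using cell_of_in(2)[OF P] cell_of_in(2)[OF Q] by blast
      then show "cell_of P x \<inter> cell_of Q x \<in> meet P Q"
        unfolding meet_def using cells[OF \<open>x \<in> X\<close>] by blast
    qed
  qed
  moreover have "inj_on (\<lambda>(c, d). c \<inter> d) (?pair ` X)"
  proof (rule inj_onI, clarify)
    fix x y assume "x \<in> X" "y \<in> X" "cell_of P x \<inter> cell_of Q x = cell_of P y \<inter> cell_of Q y"
    then have "x \<in> cell_of P y" "x \<in> cell_of Q y"
      using cell_of_in(2)[OF P] cell_of_in(2)[OF Q] by blast+
    then show "cell_of P x = cell_of P y \<and> cell_of Q x = cell_of Q y"
      using mem_cell_iff[OF P cells(1)[OF \<open>y \<in> X\<close>]] mem_cell_iff[OF Q cells(2)[OF \<open>y \<in> X\<close>]]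
      by blast
  qed
  ultimately show ?thesis by (simp add: card_image)
qed

lemma cells_meet_once_iff_bij_betw:
  assumes P: "is_partition X P" and Q: "is_partition X Q"
  shows "(\<forall>c\<in>P. \<forall>d\<in>Q. card (c \<inter> d) = 1) \<longleftrightarrow>
    bij_betw (\<lambda>x. (cell_of P x, cell_of Q x)) X (P \<times> Q)"
proof -
  let ?pair = "\<lambda>x. (cell_of P x, cell_of Q x)"
  have fibre: "c \<inter> d = {x \<in> X. ?pair x = (c, d)}" if "c \<in> P" "d \<in> Q" for c d
    using mem_cell_iff[OF P that(1)] mem_cell_iff[OF Q that(2)] by auto
  have into: "?pair ` X \<subseteq> P \<times> Q" using cell_of_in(1)[OF P] cell_of_in(1)[OF Q] by auto
  show ?thesis
  proof
    assume once: "\<forall>c\<in>P. \<forall>d\<in>Q. card (c \<inter> d) = 1"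
    have "inj_on ?pair X"
    proof (rule inj_onI)
      fix x y assume xy: "x \<in> X" "y \<in> X" and eq: "?pair x = ?pair y"
      let ?m = "cell_of P x \<inter> cell_of Q x"
      have "x \<in> ?m" "y \<in> ?m"
        using eq cell_of_in(2)[OF P xy(1)] cell_of_in(2)[OF Q xy(1)]
          cell_of_in(2)[OF P xy(2)] cell_of_in(2)[OF Q xy(2)] by auto
      moreover have "card ?m = 1"
        using once cell_of_in(1)[OF P xy(1)] cell_of_in(1)[OF Q xy(1)] by blast
      ultimately show "x = y" by (metis card_1_singletonE singletonD)
    qed
    moreover have "P \<times> Q \<subseteq> ?pair ` X"
    proof clarify
      fix c d assume "c \<in> P" "d \<in> Q"
      then have "c \<inter> d \<noteq> {}" using once by fastforce
      then show "(c, d) \<in> ?pair ` X" using fibre[OF \<open>c \<in> P\<close> \<open>d \<in> Q\<close>] by blast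
    qed
    ultimately show "bij_betw ?pair X (P \<times> Q)" using into unfolding bij_betw_def by blast
  next
    assume bij: "bij_betw ?pair X (P \<times> Q)"
    show "\<forall>c\<in>P. \<forall>d\<in>Q. card (c \<inter> d) = 1"
    proof (intro ballI)
      fix c d assume "c \<in> P" "d \<in> Q"
      then have "(c, d) \<in> ?pair ` X" using bij_betw_imp_surj_on[OF bij] by simp
      then obtain x where x: "x \<in> X" "?pair x = (c, d)" by blast
      have "{y \<in> X. ?pair y = (c, d)} = {x}"
      proof (intro equalityI subsetI)
        fix y assume "y \<in> {y \<in> X. ?pair y = (c, d)}"
        then have "y \<in> X" "?pair y = ?pair x" using x by auto
        then show "y \<in> {x}" using inj_onD[OF bij_betw_imp_inj_on[OF bij] _ _ x(1)] by blast
      qed (use x in simp)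
      then show "card (c \<inter> d) = 1" using fibre[OF \<open>c \<in> P\<close> \<open>d \<in> Q\<close>] by simp
    qed
  qed
qed

lemma adj33_iff_card_meet:
  assumes "P \<in> P33" "Q \<in> P33"
  shows "adj33 P Q \<longleftrightarrow> card (meet P Q) = 9"
proof -
  let ?X = "{1..9::nat}" and ?pair = "\<lambda>x. (cell_of P x, cell_of Q x)"
  have P: "is_partition ?X P" "card P = 3" and Q: "is_partition ?X Q" "card Q = 3"
    using assms unfolding P33_def by auto
  have card_PQ: "card (P \<times> Q) = 9" using P(2) Q(2) by (simp add: card_cartesian_product)
  have "finite (P \<times> Q)" using card_PQ card.infinite by fastforce
  have into: "?pair ` ?X \<subseteq> P \<times> Q" using cell_of_in[OF P(1)] cell_of_in[OF Q(1)] by auto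
  have "adj33 P Q \<longleftrightarrow> (\<forall>c\<in>P. \<forall>d\<in>Q. card (c \<inter> d) = 1)"
    unfolding adj33_def by (metis Int_commute)
  also have "\<dots> \<longleftrightarrow> bij_betw ?pair ?X (P \<times> Q)"
    by (rule cells_meet_once_iff_bij_betw[OF P(1) Q(1)])
  also have "\<dots> \<longleftrightarrow> card (?pair ` ?X) = 9"
    using card_subset_eq[OF \<open>finite (P \<times> Q)\<close> into] card_PQ inj_on_iff_eq_card[of ?X ?pair]
    unfolding bij_betw_def by auto
  also have "\<dots> \<longleftrightarrow> card (meet P Q) = 9"
    using card_meet_eq_card_cell_pairs[OF P(1) Q(1)] by simp
  finally show ?thesis .
qed

lemma adj33_sym: "adj33 P Q \<longleftrightarrow> adj33 Q P"
  unfolding adj33_def by blast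

section \<open>Relabelling the ground set\<close>

definition relabel :: "('a \<Rightarrow> 'b) \<Rightarrow> 'a set set \<Rightarrow> 'b set set" where
  "relabel g P = (`) g ` P"

lemma relabel_comp: "relabel g (relabel h P) = relabel (g \<circ> h) P"
  unfolding relabel_def by (simp add: image_image image_comp)

lemma inj_relabel:
  assumes "inj g"
  shows "inj (relabel g)"
  unfolding relabel_def by (intro inj_on_image) (simp add: assms)

lemma card_relabel:
  assumes "inj g"
  shows "card (relabel g P) = card P"
  unfolding relabel_def by (intro card_image inj_on_image inj_on_subset[OF assms]) simp

lemma card_image_Int:
  assumes "inj g"
  shows "card (g ` c \<inter> g ` d) = card (c \<inter> d)"
  by (simp add: image_Int[OF assms, symmetric] card_image inj_on_subset[OF assms])

lemma meet_relabel:
  assumes "inj g"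
  shows "meet (relabel g P) (relabel g Q) = relabel g (meet P Q)"
proof
  show "meet (relabel g P) (relabel g Q) \<subseteq> relabel g (meet P Q)"
  proof
    fix m assume "m \<in> meet (relabel g P) (relabel g Q)"
    then obtain c d where "c \<in> P" "d \<in> Q" "g ` c \<inter> g ` d \<noteq> {}" "m = g ` c \<inter> g ` d"
      unfolding meet_def relabel_def by blast
    then show "m \<in> relabel g (meet P Q)"
      unfolding meet_def relabel_def image_Int[OF assms, symmetric] by blast
  qed
  show "relabel g (meet P Q) \<subseteq> meet (relabel g P) (relabel g Q)"
  proof
    fix m assume "m \<in> relabel g (meet P Q)"
    then obtain c d where "c \<in> P" "d \<in> Q" "c \<inter> d \<noteq> {}" "m = g ` (c \<inter> d)"
      unfolding meet_def relabel_def by blast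
    then show "m \<in> meet (relabel g P) (relabel g Q)"
      unfolding meet_def relabel_def image_Int[OF assms] by blast
  qed
qed

lemma adj33_relabel:
  assumes "inj g"
  shows "adj33 (relabel g P) (relabel g Q) \<longleftrightarrow> adj33 P Q"
  unfolding adj33_def relabel_def using card_image_Int[OF assms] by auto

lemma is_partition_relabel:
  assumes "inj g" "is_partition X P"
  shows "is_partition (g ` X) (relabel g P)"
  unfolding is_partition_def
proof (intro conjI ballI impI)
  show "\<Union> (relabel g P) = g ` X"
    using assms(2) image_Union[of g P] unfolding is_partition_def relabel_def by simp
next
  fix c' assume "c' \<in> relabel g P"
  then show "c' \<noteq> {}" using assms(2) unfolding is_partition_def relabel_def by auto
next
  fix c' d' assume "c' \<in> relabel g P" "d' \<in> relabel g P" "c' \<noteq> d'"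
  then obtain c d where "c \<in> P" "d \<in> P" "c \<noteq> d" "c' = g ` c" "d' = g ` d"
    unfolding relabel_def by blast
  then show "c' \<inter> d' = {}"
    using assms(2) image_Int[OF assms(1), of c d] unfolding is_partition_def by auto
qed

lemma relabel_P33:
  assumes "g permutes {1..9}" "P \<in> P33"
  shows "relabel g P \<in> P33"
proof -
  have inj: "inj g" using permutes_inj[OF assms(1)] .
  have "is_partition (g ` {1..9}) (relabel g P)"
    using is_partition_relabel[OF inj] assms(2) unfolding P33_def by blast
  moreover have "card (relabel g P) = 3"
    using assms(2) card_relabel[OF inj] unfolding P33_def by simp
  moreover have "\<forall>c\<in>relabel g P. card c = 3"
    using assms(2) inj_on_subset[OF inj] unfolding P33_def relabel_def by (auto simp: card_image)
  ultimately show ?thesis unfolding P33_def using permutes_image[OF assms(1)] by simp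
qed

lemma relabel_image_P33:
  assumes "g permutes {1..9}"
  shows "relabel g ` P33 = P33"
proof
  show "relabel g ` P33 \<subseteq> P33" using relabel_P33[OF assms] by blast
  show "P33 \<subseteq> relabel g ` P33"
  proof
    fix \<sigma> assume "\<sigma> \<in> P33"
    then have "relabel (inv g) \<sigma> \<in> P33" using relabel_P33[OF permutes_inv[OF assms]] by blast
    moreover have "relabel g (relabel (inv g) \<sigma>) = \<sigma>"
      unfolding relabel_comp permutes_inv_o(1)[OF assms] by (simp add: relabel_def)
    ultimately show "\<sigma> \<in> relabel g ` P33" by (metis image_eqI)
  qed
qed

lemma independent33_relabel:
  assumes "g permutes {1..9}" "independent33 S"
  shows "independent33 (relabel g ` S)"
  using assms relabel_P33[OF assms(1)] adj33_relabel[OF permutes_inj[OF assms(1)]]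
  unfolding independent33_def by auto

lemma partition_relabel_exists:
  assumes P: "is_partition X P" and Q: "is_partition Y Q" and \<phi>: "bij_betw \<phi> P Q"
    and cards: "\<And>c. c \<in> P \<Longrightarrow> finite c \<and> card (\<phi> c) = card c"
  shows "\<exists>g. bij_betw g X Y \<and> relabel g P = Q"
proof -
  have "\<exists>h. bij_betw h c (\<phi> c)" if "c \<in> P" for c
  proof -
    have "c \<noteq> {}" using P that unfolding is_partition_def by blast
    then have "finite (\<phi> c)" using cards[OF that] card_ge_0_finite by fastforce
    then show ?thesis using finite_same_card_bij cards[OF that] by metis
  qed
  then obtain h where h: "\<And>c. c \<in> P \<Longrightarrow> bij_betw (h c) c (\<phi> c)" by metis
  define g where "g x = h (cell_of P x) x" for x
  have g: "bij_betw g c (\<phi> c)" if "c \<in> P" for c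
    using h[OF that]
    by (rule bij_betw_cong[THEN iffD1, rotated]) (simp add: g_def cell_of_eq[OF P that])
  have "disjoint_family_on \<phi> P"
    unfolding disjoint_family_on_def
  proof (intro ballI impI)
    fix c d assume "c \<in> P" "d \<in> P" "c \<noteq> d"
    then have "\<phi> c \<noteq> \<phi> d" "\<phi> c \<in> Q" "\<phi> d \<in> Q"
      using \<phi> unfolding bij_betw_def inj_on_def by auto
    then show "\<phi> c \<inter> \<phi> d = {}" using Q unfolding is_partition_def by blast
  qed
  then have "bij_betw g (\<Union>c\<in>P. c) (\<Union>c\<in>P. \<phi> c)" using g by (rule bij_betw_UNION_disjoint)
  moreover have "(\<Union>c\<in>P. c) = X" "(\<Union>c\<in>P. \<phi> c) = Y"
    using P Q bij_betw_imp_surj_on[OF \<phi>] unfolding is_partition_def by auto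
  moreover have "relabel g P = Q"
    using bij_betw_imp_surj_on[OF g] bij_betw_imp_surj_on[OF \<phi>] unfolding relabel_def
    by (metis (no_types, lifting) image_cong)
  ultimately show ?thesis by auto
qed

lemma P33_relabel_transitive:
  assumes "P \<in> P33" "Q \<in> P33"
  shows "\<exists>g. g permutes {1..9} \<and> relabel g P = Q"
proof -
  have P: "is_partition {1..9} P" "card P = 3" "\<And>c. c \<in> P \<Longrightarrow> card c = 3"
    and Q: "is_partition {1..9} Q" "card Q = 3" "\<And>d. d \<in> Q \<Longrightarrow> card d = 3"
    using assms unfolding P33_def by auto
  obtain \<phi> where \<phi>: "bij_betw \<phi> P Q"
    using finite_same_card_bij[of P Q] P(2) Q(2) card_ge_0_finite by fastforce
  have "\<And>c. c \<in> P \<Longrightarrow> finite c \<and> card (\<phi> c) = card c"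
    using P(3) Q(3) bij_betwE[OF \<phi>] card_ge_0_finite by fastforce
  then obtain g where g: "bij_betw g {1..9} {1..9}" "relabel g P = Q"
    using partition_relabel_exists[OF P(1) Q(1) \<phi>] by blast
  define g' where "g' x = (if x \<in> {1..9} then g x else x)" for x :: nat
  have "bij_betw g' {1..9} {1..9}"
    using g(1) bij_betw_cong[of "{1..9}" g' g "{1..9}"] by (simp add: g'_def)
  then have "g' permutes {1..9}" by (rule bij_imp_permutes) (auto simp: g'_def)
  moreover have "relabel g' P = relabel g P"
    unfolding relabel_def g'_def using P(1) unfolding is_partition_def
    by (intro image_cong refl) auto
  ultimately show ?thesis using g(2) by auto
qed

section \<open>Double counting in a graph\<close>

lemma sum_card_related_swap:
  assumes "finite A" "finite B"
  shows "(\<Sum>a\<in>A. card {b \<in> B. R a b}) = (\<Sum>b\<in>B. card {a \<in> A. R a b})"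
proof -
  have "card {b \<in> B. R a b} = (\<Sum>b\<in>B. if R a b then 1 else 0)" for a
    using sum.inter_filter[OF assms(2), of "\<lambda>_. 1::nat"] by simp
  moreover have "card {a \<in> A. R a b} = (\<Sum>a\<in>A. if R a b then 1 else 0)" for b
    using sum.inter_filter[OF assms(1), of "\<lambda>_. 1::nat"] by simp
  ultimately show ?thesis using sum.swap by simp
qed

lemma sum_if_eq_mult_card:
  assumes "finite A"
  shows "(\<Sum>x\<in>A. if P x then c else 0) = c * card {x \<in> A. P x}"
  using sum.inter_filter[OF assms, of "\<lambda>_. c" P] by (simp add: mult.commute)

lemma card_independent_in_triangle_union:
  fixes R :: "'a \<Rightarrow> 'a \<Rightarrow> bool"
  assumes "finite N" and "symp R"
    and triangle: "\<And>x. x \<in> N \<Longrightarrow> \<exists>y z. {w \<in> N. R x w} = {y, z} \<and> y \<noteq> z \<and> R y z"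
    and "A \<subseteq> N" and indep: "\<And>x y. x \<in> A \<Longrightarrow> y \<in> A \<Longrightarrow> \<not> R x y"
  shows "3 * card A \<le> card N"
proof -
  define C where "C x = insert x {w \<in> N. R x w}" for x
  have C_sub: "C x \<subseteq> N" if "x \<in> A" for x using that \<open>A \<subseteq> N\<close> unfolding C_def by blast
  have card_C: "card (C x) = 3" if "x \<in> A" for x
  proof -
    have "x \<in> N" using that \<open>A \<subseteq> N\<close> by blast
    then obtain y z where yz: "{w \<in> N. R x w} = {y, z}" "y \<noteq> z" using triangle by blast
    then have "R x y" "R x z" by (auto simp: set_eq_iff)
    then have "x \<noteq> y" "x \<noteq> z" using indep[OF that that] by auto
    then show ?thesis unfolding C_def yz(1) using yz(2) by simp
  qed
  have disjoint: "C x \<inter> C x' = {}" if "x \<in> A" "x' \<in> A" "x \<noteq> x'" for x x'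
  proof (rule ccontr)
    have no_edge: "\<not> R x x'" "\<not> R x' x" using indep that by blast+
    assume "C x \<inter> C x' \<noteq> {}"
    then obtain w where w: "w \<in> C x" "w \<in> C x'" by blast
    show False
    proof (cases "w = x \<or> w = x'")
      case True
      then show False using w no_edge \<open>x \<noteq> x'\<close> unfolding C_def by auto
    next
      case False
      then have "w \<in> N" "R x w" "R x' w" using w unfolding C_def by auto
      then have "R w x" "R w x'" using \<open>symp R\<close> by (auto dest: sympD)
      obtain y z where yz: "{v \<in> N. R w v} = {y, z}" "R y z" using triangle[OF \<open>w \<in> N\<close>] by blast
      have "x \<in> {y, z}" "x' \<in> {y, z}"
        using \<open>R w x\<close> \<open>R w x'\<close> that(1,2) \<open>A \<subseteq> N\<close> unfolding yz(1)[symmetric] by auto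
      then have "R x x' \<or> R x' x" using yz(2) \<open>x \<noteq> x'\<close> by auto
      then show False using no_edge by blast
    qed
  qed
  have "finite A" using \<open>A \<subseteq> N\<close> \<open>finite N\<close> finite_subset by blast
  have finite_C: "finite (C x)" if "x \<in> A" for x
    using C_sub[OF that] \<open>finite N\<close> finite_subset by blast
  have "card (\<Union>x\<in>A. C x) = (\<Sum>x\<in>A. card (C x))"
    by (rule card_UN_disjoint[OF \<open>finite A\<close>]) (simp_all add: finite_C disjoint)
  also have "\<dots> = 3 * card A" using card_C by simp
  finally have "3 * card A = card (\<Union>x\<in>A. C x)" ..
  also have "\<dots> \<le> card N" using C_sub by (intro card_mono[OF \<open>finite N\<close>]) blast
  finally show ?thesis .
qed

lemma card_related_eq_if_tight:
  fixes R :: "'a \<Rightarrow> 'a \<Rightarrow> bool"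
  assumes "finite V" "S \<subseteq> V"
    and indep: "\<And>\<sigma> \<tau>. \<sigma> \<in> S \<Longrightarrow> \<tau> \<in> S \<Longrightarrow> \<not> R \<tau> \<sigma>"
    and degree: "\<And>\<sigma>. \<sigma> \<in> S \<Longrightarrow> card {\<tau> \<in> V. R \<tau> \<sigma>} = d"
    and bound: "\<And>\<tau>. \<tau> \<in> V \<Longrightarrow> card {\<sigma> \<in> S. R \<tau> \<sigma>} \<le> k"
    and tight: "card S * d = card (V - S) * k"
    and "\<tau> \<in> V - S"
  shows "card {\<sigma> \<in> S. R \<tau> \<sigma>} = k"
proof -
  let ?f = "\<lambda>\<tau>. card {\<sigma> \<in> S. R \<tau> \<sigma>}"
  have "finite S" using assms(1,2) finite_subset by blast
  have "(\<Sum>\<tau>\<in>V. ?f \<tau>) = (\<Sum>\<sigma>\<in>S. card {\<tau> \<in> V. R \<tau> \<sigma>})"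
    by (rule sum_card_related_swap[OF assms(1) \<open>finite S\<close>])
  also have "\<dots> = card S * d" using degree by simp
  finally have total: "(\<Sum>\<tau>\<in>V. ?f \<tau>) = card S * d" .
  have "(\<Sum>\<tau>\<in>S. ?f \<tau>) = 0" using indep \<open>finite S\<close> by simp
  then have "(\<Sum>\<tau>\<in>V - S. ?f \<tau>) = (\<Sum>\<tau>\<in>V - S. k)"
    using total tight sum.subset_diff[OF assms(2,1), of ?f] by simp
  then show ?thesis
    using sum_mono_inv[of ?f "V - S" "\<lambda>_. k"] bound assms(1,7) by auto
qed

section \<open>Enumerating the partitions\<close>

fun choose2 :: "'a list \<Rightarrow> 'a list list" where
  "choose2 [] = []"
| "choose2 (a # r) = map (\<lambda>b. [a, b]) r @ choose2 r"

lemma choose2_complete: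
  "distinct r \<Longrightarrow> A \<subseteq> set r \<Longrightarrow> card A = 2 \<Longrightarrow> \<exists>s\<in>set (choose2 r). set s = A"
proof (induction r arbitrary: A)
  case Nil
  then show ?case by simp
next
  case (Cons a r)
  show ?case
  proof (cases "a \<in> A")
    case True
    then obtain b where "A = {a, b}" "a \<noteq> b"
      using Cons.prems(3) by (metis card_2_iff insert_commute insertE singletonD)
    then have "[a, b] \<in> set (choose2 (a # r))" "set [a, b] = A" using Cons.prems(2) by auto
    then show ?thesis by blast
  next
    case False
    then have "A \<subseteq> set r" using Cons.prems(2) by auto
    then obtain s where "s \<in> set (choose2 r)" "set s = A" using Cons.IH Cons.prems(1,3) by auto
    then show ?thesis by auto
  qed
qed

function triple_partitions :: "'a list \<Rightarrow> 'a list list list" where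
  "triple_partitions [] = [[]]"
| "triple_partitions (m # r) =
     concat (map (\<lambda>s. map ((#) (m # s)) (triple_partitions (filter (\<lambda>x. x \<notin> set s) r)))
       (choose2 r))"
  by pat_completeness auto
termination by (relation "measure length") (auto simp: le_imp_less_Suc)

definition partition_of :: "'a list list \<Rightarrow> 'a set set" where
  "partition_of p = set ` set p"

lemma triple_partitions_complete:
  "distinct xs \<Longrightarrow> is_partition (set xs) P \<Longrightarrow> \<forall>c\<in>P. card c = 3 \<Longrightarrow>
    P \<in> partition_of ` set (triple_partitions xs)"
proof (induction xs arbitrary: P rule: triple_partitions.induct)
  case 1
  then have "P = {}" unfolding is_partition_def by auto
  then show ?case by (simp add: partition_of_def)
next
  case (2 m r)
  have "m \<in> \<Union>P" using "2.prems"(2) unfolding is_partition_def by simp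
  then obtain c where c: "c \<in> P" "m \<in> c" by blast
  have "c \<subseteq> insert m (set r)" using c(1) "2.prems"(2) unfolding is_partition_def by auto
  moreover have "card c = 3" "m \<notin> set r" "distinct r" using c(1) "2.prems"(1,3) by auto
  ultimately have "c - {m} \<subseteq> set r" "card (c - {m}) = 2" using c(2) by auto
  then obtain s where s: "s \<in> set (choose2 r)" "set s = c - {m}"
    using choose2_complete \<open>distinct r\<close> by blast
  have rest: "set (filter (\<lambda>x. x \<notin> set s) r) = insert m (set r) - c"
    using s(2) c(2) \<open>m \<notin> set r\<close> by auto
  have "is_partition (set (filter (\<lambda>x. x \<notin> set s) r)) (P - {c})"
    unfolding rest using is_partition_remove_cell[OF "2.prems"(2) c(1)] by simp
  moreover have "distinct (filter (\<lambda>x. x \<notin> set s) r)" using \<open>distinct r\<close> by simp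
  moreover have "\<forall>d\<in>P - {c}. card d = 3" using "2.prems"(3) by blast
  ultimately have "P - {c} \<in> partition_of ` set (triple_partitions (filter (\<lambda>x. x \<notin> set s) r))"
    using "2.IH"[OF s(1)] by blast
  then obtain p' where p': "p' \<in> set (triple_partitions (filter (\<lambda>x. x \<notin> set s) r))"
      "partition_of p' = P - {c}"
    by blast
  have "(m # s) # p' \<in> set (triple_partitions (m # r))" using s(1) p'(1) by auto
  moreover have "set (m # s) = c" using s(2) c(2) by auto
  then have "partition_of ((m # s) # p') = insert c (P - {c})"
    using p'(2) unfolding partition_of_def by simp
  ultimately show ?case using c(1) by (metis image_eqI insert_Diff)
qed

definition is_rep :: "nat list list \<Rightarrow> bool" where
  "is_rep p \<longleftrightarrow> map length p = [3, 3, 3] \<and> sort (concat p) = [1..<10]"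

lemma is_repE:
  assumes "is_rep p"
  obtains c0 c1 c2 where "p = [c0, c1, c2]" "length c0 = 3" "length c1 = 3" "length c2 = 3"
    "distinct (c0 @ c1 @ c2)" "set (c0 @ c1 @ c2) = {1..9}"
proof -
  obtain c0 c1 c2 where p: "p = [c0, c1, c2]" "length c0 = 3" "length c1 = 3" "length c2 = 3"
    using assms unfolding is_rep_def by (auto simp: map_eq_Cons_conv)
  have "sort (c0 @ c1 @ c2) = [1..<10]" using assms p(1) unfolding is_rep_def by simp
  then have d: "distinct (c0 @ c1 @ c2)" and u: "set (c0 @ c1 @ c2) = set [1..<10]"
    by (metis distinct_sort distinct_upt, metis set_sort)
  have "set [1..<10] = {1..9::nat}" by auto
  then show ?thesis using u by (intro that[OF p d]) auto
qed

lemma is_repD: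
  assumes "is_rep p"
  shows "length p = 3" "distinct (concat p)" "set (concat p) = {1..9}"
  using is_repE[OF assms]
  by (metis concat.simps append_Nil2 length_Cons list.size(3) numeral_3_eq_3)+

lemma is_rep_P33:
  assumes "is_rep p"
  shows "partition_of p \<in> P33"
proof -
  obtain c0 c1 c2 where p: "p = [c0, c1, c2]" "length c0 = 3" "length c1 = 3" "length c2 = 3"
    and d: "distinct (c0 @ c1 @ c2)" and u: "set (c0 @ c1 @ c2) = {1..9}"
    using is_repE[OF assms] by blast
  have cards: "card (set c0) = 3" "card (set c1) = 3" "card (set c2) = 3"
    using p(2-4) d by (auto simp: distinct_card)
  have disj: "set c0 \<inter> set c1 = {}" "set c0 \<inter> set c2 = {}" "set c1 \<inter> set c2 = {}"
    using d by auto
  have ne: "set c0 \<noteq> {}" "set c1 \<noteq> {}" "set c2 \<noteq> {}" using cards by auto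
  have "partition_of p = {set c0, set c1, set c2}" unfolding partition_of_def p(1) by simp
  then show ?thesis
    unfolding P33_def is_partition_def using cards disj ne u by (auto simp: card_insert_if)
qed

definition block_index :: "'a list list \<Rightarrow> 'a \<Rightarrow> nat" where
  "block_index p x = length (takeWhile (\<lambda>c. x \<notin> set c) p)"

lemma block_index:
  assumes "x \<in> set (concat p)"
  shows "block_index p x < length p \<and> x \<in> set (p ! block_index p x)"
  using assms unfolding block_index_def by (induction p) auto

lemma cell_of_partition_of:
  assumes "is_rep p" "x \<in> {1..9}"
  shows "block_index p x < 3" "cell_of (partition_of p) x = set (p ! block_index p x)"
proof -
  have "x \<in> set (concat p)" "length p = 3" using is_repD[OF assms(1)] assms(2) by auto
  then show lt: "block_index p x < 3" using block_index by metis
  have "is_partition {1..9} (partition_of p)"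
    using is_rep_P33[OF assms(1)] unfolding P33_def by blast
  moreover have "set (p ! block_index p x) \<in> partition_of p"
    using lt \<open>length p = 3\<close> unfolding partition_of_def by simp
  moreover have "x \<in> set (p ! block_index p x)" using block_index[OF \<open>x \<in> set (concat p)\<close>] ..
  ultimately show "cell_of (partition_of p) x = set (p ! block_index p x)" by (rule cell_of_eq)
qed

lemma inj_on_cells:
  assumes "is_rep p"
  shows "inj_on (\<lambda>i. set (p ! i)) {..<3}"
proof -
  obtain c0 c1 c2 where p: "p = [c0, c1, c2]" "length c0 = 3" "length c1 = 3" "length c2 = 3"
    and d: "distinct (c0 @ c1 @ c2)"
    using is_repE[OF assms] by blast
  have "set c0 \<noteq> set c1" "set c0 \<noteq> set c2" "set c1 \<noteq> set c2"
    using p(2-4) d by (auto simp: disjoint_iff)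
  then show ?thesis unfolding inj_on_def p(1) by (auto simp: less_Suc_eq numeral_3_eq_3)
qed

definition labels :: "nat list list \<Rightarrow> nat list" where
  "labels p = map (block_index p) [1..<10]"

lemma card_meet_partition_of:
  assumes p: "is_rep p" and q: "is_rep q"
  shows "card (meet (partition_of p) (partition_of q)) = card (set (zip (labels p) (labels q)))"
proof -
  let ?X = "{1..9::nat}" and ?cells = "\<lambda>(i, j). (set (p ! i), set (q ! j))"
  have pairs: "set (zip (labels p) (labels q)) = (\<lambda>x. (block_index p x, block_index q x)) ` ?X"
    unfolding labels_def by (auto simp: zip_map_map zip_same_conv_map)
  have cells: "(\<lambda>x. (cell_of (partition_of p) x, cell_of (partition_of q) x)) ` ?X
      = ?cells ` set (zip (labels p) (labels q))"
    unfolding pairs image_image using cell_of_partition_of(2)[OF p] cell_of_partition_of(2)[OF q]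
    by simp
  have inj: "inj_on ?cells (set (zip (labels p) (labels q)))"
  proof -
    have "set (zip (labels p) (labels q)) \<subseteq> {..<3} \<times> {..<3}"
      unfolding pairs using cell_of_partition_of(1)[OF p] cell_of_partition_of(1)[OF q] by auto
    moreover have "inj_on ?cells ({..<3} \<times> {..<3})"
      using inj_on_cells[OF p] inj_on_cells[OF q] unfolding inj_on_def by auto
    ultimately show ?thesis by (rule inj_on_subset[rotated])
  qed
  have "is_partition ?X (partition_of p)" "is_partition ?X (partition_of q)"
    using is_rep_P33[OF p] is_rep_P33[OF q] unfolding P33_def by blast+
  then have "card (meet (partition_of p) (partition_of q))
      = card ((\<lambda>x. (cell_of (partition_of p) x, cell_of (partition_of q) x)) ` ?X)"
    by (rule card_meet_eq_card_cell_pairs)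
  also have "\<dots> = card (set (zip (labels p) (labels q)))"
    unfolding cells by (rule card_image[OF inj])
  finally show ?thesis .
qed

lemma adj33_partition_of:
  assumes "is_rep p" "is_rep q"
  shows "adj33 (partition_of p) (partition_of q) \<longleftrightarrow> distinct (zip (labels p) (labels q))"
proof -
  have "length (zip (labels p) (labels q)) = 9" by (simp add: labels_def)
  then show ?thesis
    using adj33_iff_card_meet[OF is_rep_P33[OF assms(1)] is_rep_P33[OF assms(2)]]
      card_meet_partition_of[OF assms] by (metis card_distinct distinct_card)
qed

definition reps :: "nat list list list" where
  "reps = triple_partitions [1..<10]"

definition cell_key :: "nat list list \<Rightarrow> nat list list" where
  "cell_key p = map (\<lambda>x. sort (p ! block_index p x)) [1..<10]"

lemma reps_is_rep: "list_all is_rep reps"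
  by code_simp

lemma cell_keys_increasing: "successively (<) (map cell_key reps)"
  by code_simp

lemma length_reps: "length reps = 280"
  by code_simp

lemma is_rep_reps: "p \<in> set reps \<Longrightarrow> is_rep p"
  using reps_is_rep by (simp add: list_all_iff)

lemma cell_key_partition_of:
  assumes "is_rep p"
  shows "cell_key p = map (\<lambda>x. sorted_list_of_set (cell_of (partition_of p) x)) [1..<10]"
proof -
  have "sort (p ! block_index p x) = sorted_list_of_set (cell_of (partition_of p) x)"
    if "x \<in> {1..9}" for x
  proof -
    have "p ! block_index p x \<in> set p"
      using cell_of_partition_of(1)[OF assms that] is_repD(1)[OF assms] by simp
    then have "distinct (p ! block_index p x)"
      using is_repD(2)[OF assms] by (simp add: distinct_concat_iff)
    then show ?thesis
      by (simp add: cell_of_partition_of(2)[OF assms that] sorted_list_of_set_sort_remdups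
          distinct_remdups_id)
  qed
  then show ?thesis unfolding cell_key_def by simp
qed

lemma distinct_cell_keys: "distinct (map cell_key reps)"
  using cell_keys_increasing by (simp add: successively_conv_sorted_wrt strict_sorted_iff)

lemma distinct_reps: "distinct reps"
  using distinct_cell_keys by (simp add: distinct_map)

lemma inj_on_partition_of_reps: "inj_on partition_of (set reps)"
proof (rule inj_onI)
  fix p q assume "p \<in> set reps" "q \<in> set reps" "partition_of p = partition_of q"
  then have "cell_key p = cell_key q"
    using cell_key_partition_of is_rep_reps by simp
  then show "p = q"
    using distinct_cell_keys \<open>p \<in> set reps\<close> \<open>q \<in> set reps\<close>
    by (auto simp: distinct_map dest: inj_onD)
qed

lemma P33_eq_reps: "P33 = partition_of ` set reps"
proof
  have "set [1..<10] = {1..9::nat}" by auto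
  then show "P33 \<subseteq> partition_of ` set reps"
    unfolding P33_def reps_def using triple_partitions_complete[of "[1..<10]"] by auto
  show "partition_of ` set reps \<subseteq> P33"
    using is_rep_reps is_rep_P33 by blast
qed

lemma card_partition_of_reps:
  assumes "set xs \<subseteq> set reps" "distinct xs"
  shows "card (partition_of ` set xs) = length xs"
  using card_image[OF inj_on_subset[OF inj_on_partition_of_reps assms(1)]]
    distinct_card[OF assms(2)] by simp

lemma finite_P33: "finite P33"
  unfolding P33_eq_reps by simp

lemma card_P33: "card P33 = 280"
  using card_partition_of_reps[of reps] distinct_reps length_reps unfolding P33_eq_reps by simp

section \<open>The neighbourhood of the base partition\<close>

definition nbrs33 :: "nat set set \<Rightarrow> nat set set set" where
  "nbrs33 \<tau> = {\<sigma> \<in> P33. adj33 \<tau> \<sigma>}"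

definition pi0 :: "nat set set" where
  "pi0 = {{1, 2, 3}, {4, 5, 6}, {7, 8, 9}}"

definition meet5_pi0 :: "nat set set set" where
  "meet5_pi0 = {\<sigma> \<in> P33. card (meet pi0 \<sigma>) = 5}"

definition pi0_rep :: "nat list list" where
  "pi0_rep = [[1, 2, 3], [4, 5, 6], [7, 8, 9]]"

lemma is_rep_pi0_rep: "is_rep pi0_rep"
  by code_simp

lemma partition_of_pi0_rep: "partition_of pi0_rep = pi0"
  by (simp add: partition_of_def pi0_rep_def pi0_def)

lemma pi0_P33: "pi0 \<in> P33"
  using is_rep_P33[OF is_rep_pi0_rep] partition_of_pi0_rep by simp

definition nbr_reps :: "nat list list list" where
  "nbr_reps = filter (\<lambda>q. distinct (zip (labels pi0_rep) (labels q))) reps"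

definition meet5_reps :: "nat list list list" where
  "meet5_reps = filter (\<lambda>q. card (set (zip (labels pi0_rep) (labels q))) = 5) reps"

definition adj_count :: "nat list list \<Rightarrow> nat list \<Rightarrow> nat" where
  "adj_count ls l = length (filter (\<lambda>m. distinct (zip l m)) ls)"

lemma nbr_reps_meet5_reps_in_reps:
  "set nbr_reps \<subseteq> set reps" "distinct nbr_reps" "set meet5_reps \<subseteq> set reps" "distinct meet5_reps"
  using distinct_reps by (auto simp: nbr_reps_def meet5_reps_def)

lemma length_nbr_reps: "length nbr_reps = 36"
  by code_simp

lemma length_meet5_reps: "length meet5_reps = 27"
  by code_simp

lemma nbr_reps_triangles:
  "list_all (\<lambda>l. case filter (\<lambda>m. distinct (zip l m)) (map labels nbr_reps) of
      [m, m'] \<Rightarrow> distinct (zip m m') | _ \<Rightarrow> False) (map labels nbr_reps)"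
  by code_simp

text \<open>Stated over the list of computed triples rather than as a disjunction under the
  quantifier, so that evaluation computes each count once instead of once per disjunct.\<close>

lemma reps_classification:
  "list_all (\<lambda>t. t \<in> {(5, 12, 0), (6, 4, 0), (7, 4, 4)})
     (map (\<lambda>l. (card (set (zip (labels pi0_rep) l)), adj_count (map labels nbr_reps) l,
                 adj_count (map labels meet5_reps) l))
        (map labels
          (filter (\<lambda>s. s \<noteq> pi0_rep \<and> \<not> distinct (zip (labels pi0_rep) (labels s))) reps)))"
  by code_simp

lemma partition_of_filter_reps:
  "partition_of ` set (filter (\<lambda>q. \<Phi> (partition_of q)) reps) = {\<sigma> \<in> P33. \<Phi> \<sigma>}"
  unfolding P33_eq_reps by auto

lemma nbrs33_pi0: "nbrs33 pi0 = partition_of ` set nbr_reps"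
proof -
  have "nbr_reps = filter (\<lambda>q. adj33 pi0 (partition_of q)) reps"
    unfolding nbr_reps_def using is_rep_reps
    by (intro filter_cong) (auto simp: adj33_partition_of[OF is_rep_pi0_rep] partition_of_pi0_rep[symmetric])
  then show ?thesis unfolding nbrs33_def using partition_of_filter_reps[of "adj33 pi0"] by simp
qed

lemma meet5_pi0_eq: "meet5_pi0 = partition_of ` set meet5_reps"
proof -
  have "meet5_reps = filter (\<lambda>q. card (meet pi0 (partition_of q)) = 5) reps"
    unfolding meet5_reps_def using is_rep_reps
    by (intro filter_cong)
      (auto simp: card_meet_partition_of[OF is_rep_pi0_rep] partition_of_pi0_rep[symmetric])
  then show ?thesis
    unfolding meet5_pi0_def using partition_of_filter_reps[of "\<lambda>\<sigma>. card (meet pi0 \<sigma>) = 5"] by simp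
qed

lemma card_nbrs33_pi0: "card (nbrs33 pi0) = 36"
  unfolding nbrs33_pi0 using card_partition_of_reps nbr_reps_meet5_reps_in_reps length_nbr_reps
  by metis

lemma card_meet5_pi0: "card meet5_pi0 = 27"
  unfolding meet5_pi0_eq using card_partition_of_reps nbr_reps_meet5_reps_in_reps length_meet5_reps
  by metis

lemma nbrs33_in_reps:
  assumes "set xs \<subseteq> set reps" "s \<in> set reps"
  shows "partition_of ` set xs \<inter> nbrs33 (partition_of s)
    = partition_of ` set (filter (\<lambda>t. distinct (zip (labels s) (labels t))) xs)"
proof -
  have "is_rep s" "\<And>t. t \<in> set xs \<Longrightarrow> is_rep t" using assms is_rep_reps by auto
  then show ?thesis
    unfolding nbrs33_def using adj33_partition_of is_rep_P33 by auto
qed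

lemma card_nbrs33_in_reps:
  assumes "set xs \<subseteq> set reps" "distinct xs" "s \<in> set reps"
  shows "card (partition_of ` set xs \<inter> nbrs33 (partition_of s))
    = adj_count (map labels xs) (labels s)"
proof -
  let ?ys = "filter (\<lambda>t. distinct (zip (labels s) (labels t))) xs"
  have "card (partition_of ` set ?ys) = length ?ys"
    by (rule card_partition_of_reps) (use assms(1,2) in auto)
  then show ?thesis
    unfolding nbrs33_in_reps[OF assms(1,3)] adj_count_def by (simp add: filter_map comp_def)
qed

text \<open>pi0 and a neighbour sigma are the rows and columns of a 3 x 3 grid; the common
  neighbours of pi0 and sigma are its two diagonal directions, which are adjacent.\<close>

lemma nbrs33_pi0_triangle:
  assumes "\<sigma> \<in> nbrs33 pi0"
  shows "\<exists>\<tau> \<tau>'. {\<rho> \<in> nbrs33 pi0. adj33 \<sigma> \<rho>} = {\<tau>, \<tau>'} \<and> \<tau> \<noteq> \<tau>' \<and> adj33 \<tau> \<tau>'"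
proof -
  note sub = nbr_reps_meet5_reps_in_reps(1)
  obtain s where s: "s \<in> set nbr_reps" "\<sigma> = partition_of s" using assms nbrs33_pi0 by auto
  let ?ts = "filter (\<lambda>t. distinct (zip (labels s) (labels t))) nbr_reps"
  have "case map labels ?ts of [m, m'] \<Rightarrow> distinct (zip m m') | _ \<Rightarrow> False"
    using nbr_reps_triangles s(1) by (simp add: list_all_iff filter_map comp_def)
  then obtain t u where tu: "?ts = [t, u]" "distinct (zip (labels t) (labels u))"
    by (auto split: list.splits)
  have "distinct ?ts" using nbr_reps_meet5_reps_in_reps(2) by simp
  then have "t \<noteq> u" using tu(1) by simp
  have "set ?ts \<subseteq> set reps" using sub by auto
  then have "t \<in> set reps" "u \<in> set reps" using tu(1) by auto
  have "{\<rho> \<in> nbrs33 pi0. adj33 \<sigma> \<rho>} = partition_of ` set nbr_reps \<inter> nbrs33 \<sigma>"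
    unfolding nbrs33_pi0[symmetric] by (auto simp: nbrs33_def)
  also have "\<dots> = {partition_of t, partition_of u}"
    unfolding s(2) nbrs33_in_reps[OF sub subsetD[OF sub s(1)]] tu(1) by simp
  finally show ?thesis
    using tu(2) \<open>t \<noteq> u\<close> inj_on_partition_of_reps adj33_partition_of is_rep_reps
      \<open>t \<in> set reps\<close> \<open>u \<in> set reps\<close>
    by (metis inj_onD)
qed

lemma card_independent_nbrs33_pi0:
  assumes "independent33 S"
  shows "card (S \<inter> nbrs33 pi0) \<le> 12"
proof -
  have "3 * card (S \<inter> nbrs33 pi0) \<le> card (nbrs33 pi0)"
  proof (rule card_independent_in_triangle_union[where R = adj33])
    show "finite (nbrs33 pi0)" using finite_P33 by (simp add: nbrs33_def)
    show "symp adj33" using adj33_sym by (auto intro: sympI)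
    show "\<And>x. x \<in> nbrs33 pi0 \<Longrightarrow> \<exists>y z. {w \<in> nbrs33 pi0. adj33 x w} = {y, z} \<and> y \<noteq> z \<and> adj33 y z"
      by (rule nbrs33_pi0_triangle)
    show "\<And>x y. x \<in> S \<inter> nbrs33 pi0 \<Longrightarrow> y \<in> S \<inter> nbrs33 pi0 \<Longrightarrow> \<not> adj33 x y"
      using assms unfolding independent33_def by blast
  qed blast
  then show ?thesis using card_nbrs33_pi0 by simp
qed

section \<open>Transfer to an arbitrary vertex\<close>

lemma relabel_image_nbrs33:
  assumes "g permutes {1..9}"
  shows "relabel g ` nbrs33 \<tau> = nbrs33 (relabel g \<tau>)"
proof -
  have "nbrs33 (relabel g \<tau>) = {\<sigma> \<in> relabel g ` P33. adj33 (relabel g \<tau>) \<sigma>}"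
    unfolding nbrs33_def relabel_image_P33[OF assms] ..
  also have "\<dots> = relabel g ` nbrs33 \<tau>"
    unfolding nbrs33_def using adj33_relabel[OF permutes_inj[OF assms]] by auto
  finally show ?thesis by simp
qed

lemma card_relabel_Int_nbrs33:
  assumes "g permutes {1..9}"
  shows "card (relabel g ` A \<inter> nbrs33 (relabel g \<tau>)) = card (A \<inter> nbrs33 \<tau>)"
proof -
  have inj: "inj (relabel g)" using inj_relabel[OF permutes_inj[OF assms]] .
  have "relabel g ` A \<inter> nbrs33 (relabel g \<tau>) = relabel g ` (A \<inter> nbrs33 \<tau>)"
    unfolding relabel_image_nbrs33[OF assms, symmetric] by (rule image_Int[OF inj, symmetric])
  then show ?thesis using card_image[OF inj_on_subset[OF inj]] by simp
qed

lemma card_nbrs33: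
  assumes "\<tau> \<in> P33"
  shows "card (nbrs33 \<tau>) = 36"
proof -
  obtain g where g: "g permutes {1..9}" "relabel g \<tau> = pi0"
    using P33_relabel_transitive[OF assms pi0_P33] by blast
  have "card (P33 \<inter> nbrs33 \<tau>) = card (relabel g ` P33 \<inter> nbrs33 pi0)"
    using card_relabel_Int_nbrs33[OF g(1), of P33 \<tau>, unfolded g(2)] by (rule sym)
  then show ?thesis using card_nbrs33_pi0 relabel_image_P33[OF g(1)]
    by (simp add: nbrs33_def Int_absorb1)
qed

lemma card_independent_nbrs33:
  assumes "\<tau> \<in> P33" "independent33 S"
  shows "card (S \<inter> nbrs33 \<tau>) \<le> 12"
proof -
  obtain g where g: "g permutes {1..9}" "relabel g \<tau> = pi0"
    using P33_relabel_transitive[OF assms(1) pi0_P33] by blast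
  have "card (S \<inter> nbrs33 \<tau>) = card (relabel g ` S \<inter> nbrs33 pi0)"
    using card_relabel_Int_nbrs33[OF g(1), of S \<tau>, unfolded g(2)] by (rule sym)
  also have "\<dots> \<le> 12"
    by (rule card_independent_nbrs33_pi0[OF independent33_relabel[OF g(1) assms(2)]])
  finally show ?thesis .
qed

lemma card_nbrs33_max_independent:
  assumes "independent33 S" "card S = 70" "\<tau> \<in> P33 - S"
  shows "card (S \<inter> nbrs33 \<tau>) = 12"
proof -
  have S: "S \<subseteq> P33" using assms(1) unfolding independent33_def by blast
  have nbrs: "{\<sigma> \<in> S. adj33 \<tau> \<sigma>} = S \<inter> nbrs33 \<tau>" for \<tau> using S unfolding nbrs33_def by blast
  have "card {\<sigma> \<in> S. adj33 \<tau> \<sigma>} = 12"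
  proof (rule card_related_eq_if_tight[OF finite_P33 S])
    show "\<And>\<sigma> \<tau>. \<sigma> \<in> S \<Longrightarrow> \<tau> \<in> S \<Longrightarrow> \<not> adj33 \<tau> \<sigma>"
      using assms(1) unfolding independent33_def by blast
    show "card {\<tau> \<in> P33. adj33 \<tau> \<sigma>} = 36" if "\<sigma> \<in> S" for \<sigma>
      using card_nbrs33[of \<sigma>] that S adj33_sym unfolding nbrs33_def by auto
    show "card {\<sigma> \<in> S. adj33 \<tau> \<sigma>} \<le> 12" if "\<tau> \<in> P33" for \<tau>
      unfolding nbrs using card_independent_nbrs33[OF that assms(1)] .
    show "card S * 36 = card (P33 - S) * 12"
      using card_Diff_subset[OF finite_subset[OF S finite_P33] S] card_P33 assms(2) by simp
  qed (rule assms(3))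
  then show ?thesis unfolding nbrs .
qed

section \<open>Counting around the base partition\<close>

lemma meet_pi0_classification:
  assumes "\<sigma> \<in> P33" "\<sigma> \<noteq> pi0" "\<not> adj33 pi0 \<sigma>"
  shows "(card (meet pi0 \<sigma>), card (nbrs33 pi0 \<inter> nbrs33 \<sigma>), card (meet5_pi0 \<inter> nbrs33 \<sigma>))
    \<in> {(5, 12, 0), (6, 4, 0), (7, 4, 4)}"
proof -
  obtain s where s: "s \<in> set reps" "\<sigma> = partition_of s" using assms(1) P33_eq_reps by auto
  have "is_rep s" using is_rep_reps[OF s(1)] .
  have "card (nbrs33 pi0 \<inter> nbrs33 \<sigma>) = adj_count (map labels nbr_reps) (labels s)"
    "card (meet5_pi0 \<inter> nbrs33 \<sigma>) = adj_count (map labels meet5_reps) (labels s)"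
    unfolding nbrs33_pi0 meet5_pi0_eq s(2)
    using card_nbrs33_in_reps nbr_reps_meet5_reps_in_reps s(1) by blast+
  moreover have "card (meet pi0 \<sigma>) = card (set (zip (labels pi0_rep) (labels s)))"
    using card_meet_partition_of[OF is_rep_pi0_rep \<open>is_rep s\<close>] s(2) partition_of_pi0_rep by simp
  moreover have "s \<noteq> pi0_rep" "\<not> distinct (zip (labels pi0_rep) (labels s))"
    using assms(2,3) s(2) partition_of_pi0_rep adj33_partition_of[OF is_rep_pi0_rep \<open>is_rep s\<close>]
    by auto
  ultimately show ?thesis using reps_classification s(1) by (auto simp: list_all_iff)
qed

lemma meet_pi0_classification_in_independent:
  assumes "independent33 S" "pi0 \<in> S" "\<sigma> \<in> S - {pi0}"
  shows "(card (meet pi0 \<sigma>), card (nbrs33 pi0 \<inter> nbrs33 \<sigma>), card (meet5_pi0 \<inter> nbrs33 \<sigma>))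
    \<in> {(5, 12, 0), (6, 4, 0), (7, 4, 4)}"
  using assms meet_pi0_classification unfolding independent33_def by blast

lemma sum_card_Int_nbrs33_swap:
  assumes "S \<subseteq> P33" "X \<subseteq> P33"
  shows "(\<Sum>\<sigma>\<in>S. card (X \<inter> nbrs33 \<sigma>)) = (\<Sum>\<tau>\<in>X. card (S \<inter> nbrs33 \<tau>))"
proof -
  have "finite S" "finite X" using assms finite_P33 finite_subset by blast+
  have "X \<inter> nbrs33 \<sigma> = {\<tau> \<in> X. adj33 \<sigma> \<tau>}" for \<sigma> using assms(2) unfolding nbrs33_def by blast
  moreover have "S \<inter> nbrs33 \<tau> = {\<sigma> \<in> S. adj33 \<sigma> \<tau>}" for \<tau>
    using assms(1) adj33_sym unfolding nbrs33_def by blast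
  ultimately show ?thesis using sum_card_related_swap[OF \<open>finite S\<close> \<open>finite X\<close>] by simp
qed

lemma sum_common_nbrs33:
  assumes "independent33 S" "card S = 70" "pi0 \<in> S"
  shows "(\<Sum>\<sigma>\<in>S - {pi0}. card (nbrs33 pi0 \<inter> nbrs33 \<sigma>)) = 36 * 11"
proof -
  have S: "S \<subseteq> P33" using assms(1) unfolding independent33_def by blast
  have "card ((S - {pi0}) \<inter> nbrs33 \<tau>) = 11" if "\<tau> \<in> nbrs33 pi0" for \<tau>
  proof -
    have "\<tau> \<in> P33 - S" "pi0 \<in> S \<inter> nbrs33 \<tau>"
      using that assms(1,3) pi0_P33 adj33_sym unfolding nbrs33_def independent33_def by auto
    moreover have "(S - {pi0}) \<inter> nbrs33 \<tau> = (S \<inter> nbrs33 \<tau>) - {pi0}" by blast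
    ultimately show ?thesis
      using card_nbrs33_max_independent[OF assms(1,2)] by (simp add: card_Diff_singleton)
  qed
  then have "(\<Sum>\<tau>\<in>nbrs33 pi0. card ((S - {pi0}) \<inter> nbrs33 \<tau>)) = 36 * 11"
    using card_nbrs33_pi0 by simp
  then show ?thesis using sum_card_Int_nbrs33_swap[of "S - {pi0}" "nbrs33 pi0"] S
    unfolding nbrs33_def by auto
qed

lemma sum_meet5_nbrs33:
  assumes "independent33 S" "card S = 70" "pi0 \<in> S"
  shows "(\<Sum>\<sigma>\<in>S - {pi0}. card (meet5_pi0 \<inter> nbrs33 \<sigma>)) = 12 * card (meet5_pi0 - S)"
proof -
  have S: "S \<subseteq> P33" using assms(1) unfolding independent33_def by blast
  have M: "meet5_pi0 \<subseteq> P33" unfolding meet5_pi0_def by blast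
  have "card ((S - {pi0}) \<inter> nbrs33 \<tau>) = (if \<tau> \<in> S then 0 else 12)" if "\<tau> \<in> meet5_pi0" for \<tau>
  proof -
    have "\<not> adj33 pi0 \<tau>" using that adj33_iff_card_meet[OF pi0_P33] unfolding meet5_pi0_def by auto
    then have "\<not> adj33 \<tau> pi0" using adj33_sym[of \<tau> pi0] by simp
    then have eq: "(S - {pi0}) \<inter> nbrs33 \<tau> = S \<inter> nbrs33 \<tau>" unfolding nbrs33_def by blast
    show ?thesis
    proof (cases "\<tau> \<in> S")
      case True
      then have "S \<inter> nbrs33 \<tau> = {}" using assms(1) unfolding independent33_def nbrs33_def by blast
      then show ?thesis using True eq by simp
    next
      case False
      then have "\<tau> \<in> P33 - S" using M that by blast
      then show ?thesis using False eq card_nbrs33_max_independent[OF assms(1,2)] by simp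
    qed
  qed
  then have "(\<Sum>\<tau>\<in>meet5_pi0. card ((S - {pi0}) \<inter> nbrs33 \<tau>))
      = (\<Sum>\<tau>\<in>meet5_pi0. if \<tau> \<in> S then 0 else 12)"
    by simp
  also have "\<dots> = 12 * card (meet5_pi0 - S)"
    using finite_subset[OF M finite_P33] by (simp add: sum.If_cases Diff_eq)
  finally show ?thesis using sum_card_Int_nbrs33_swap[of "S - {pi0}" meet5_pi0] S M by auto
qed

lemma card_meet_pi0_self: "card (meet pi0 pi0) = 3"
proof -
  have "is_partition {1..9} pi0" "card pi0 = 3" using pi0_P33 unfolding P33_def by auto
  then show ?thesis using meet_self by metis
qed

lemma meet_counts_pi0:
  assumes "independent33 S" "card S = 70" "pi0 \<in> S"
  shows "card {\<sigma> \<in> S. card (meet pi0 \<sigma>) = 7} = 36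
       \<and> card {\<sigma> \<in> S. card (meet pi0 \<sigma>) = 6} = 18
       \<and> card {\<sigma> \<in> S. card (meet pi0 \<sigma>) = 5} = 15"
proof -
  have S: "S \<subseteq> P33" using assms(1) unfolding independent33_def by blast
  define S' where "S' = S - {pi0}"
  define n where "n k = card {\<sigma> \<in> S'. card (meet pi0 \<sigma>) = k}" for k
  have "finite S'" "card S' = 69"
    using assms(2,3) finite_subset[OF S finite_P33] unfolding S'_def by auto
  note meet_type = meet_pi0_classification_in_independent[OF assms(1,3), folded S'_def]
  have indicator: "(\<Sum>\<sigma>\<in>S'. if card (meet pi0 \<sigma>) = k then c else 0) = c * n k" for k c :: nat
    using sum_if_eq_mult_card[OF \<open>finite S'\<close>] unfolding n_def .
  have "card S' = (\<Sum>\<sigma>\<in>S'. (if card (meet pi0 \<sigma>) = 5 then 1 else 0)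
      + (if card (meet pi0 \<sigma>) = 6 then 1 else 0) + (if card (meet pi0 \<sigma>) = 7 then 1 else 0))"
    unfolding card_eq_sum by (rule sum.cong[OF refl]) (auto dest: meet_type)
  then have total: "n 5 + n 6 + n 7 = 69"
    using \<open>card S' = 69\<close> by (simp only: sum.distrib indicator)
  have "36 * 11 = (\<Sum>\<sigma>\<in>S'. card (nbrs33 pi0 \<inter> nbrs33 \<sigma>))"
    using sum_common_nbrs33[OF assms] unfolding S'_def ..
  also have "\<dots> = (\<Sum>\<sigma>\<in>S'. 4 + (if card (meet pi0 \<sigma>) = 5 then 8 else 0))"
    by (rule sum.cong[OF refl]) (auto dest: meet_type)
  finally have n5: "n 5 = 15"
    using \<open>card S' = 69\<close> by (simp only: sum.distrib indicator) simp
  have "meet5_pi0 \<inter> S = {\<sigma> \<in> S'. card (meet pi0 \<sigma>) = 5}"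
    using S card_meet_pi0_self unfolding meet5_pi0_def S'_def by auto
  then have "card (meet5_pi0 - S) = 27 - n 5"
    using card_meet5_pi0 card_Diff_subset_Int[of meet5_pi0 S] \<open>finite S'\<close> unfolding n_def by simp
  then have "12 * (27 - n 5) = (\<Sum>\<sigma>\<in>S'. card (meet5_pi0 \<inter> nbrs33 \<sigma>))"
    using sum_meet5_nbrs33[OF assms] unfolding S'_def by simp
  also have "\<dots> = (\<Sum>\<sigma>\<in>S'. if card (meet pi0 \<sigma>) = 7 then 4 else 0)"
    by (rule sum.cong[OF refl]) (auto dest: meet_type)
  finally have n7: "n 7 = 36" using n5 by (simp only: indicator)
  have "{\<sigma> \<in> S. card (meet pi0 \<sigma>) = k} = {\<sigma> \<in> S'. card (meet pi0 \<sigma>) = k}" if "k \<noteq> 3" for k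
    using that card_meet_pi0_self unfolding S'_def by auto
  then show ?thesis using total n5 n7 unfolding n_def by simp
qed

lemma card_meet_class_relabel:
  assumes "inj g"
  shows "card {\<sigma> \<in> relabel g ` S. card (meet (relabel g \<pi>) \<sigma>) = k}
    = card {\<sigma> \<in> S. card (meet \<pi> \<sigma>) = k}"
proof -
  have "{\<sigma> \<in> relabel g ` S. card (meet (relabel g \<pi>) \<sigma>) = k}
      = relabel g ` {\<sigma> \<in> S. card (meet \<pi> \<sigma>) = k}"
    using meet_relabel[OF assms] card_relabel[OF assms] by auto
  then show ?thesis using card_image[OF inj_on_subset[OF inj_relabel[OF assms] subset_UNIV]] by simp
qed

theorem corollary5p2:
  fixes S :: "nat set set set" and \<pi> :: "nat set set"
  assumes "independent33 S" and "card S = 70" and "\<pi> \<in> S"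
  shows "card {\<sigma>\<in>S. card (meet \<pi> \<sigma>) = 7} = 36
       \<and> card {\<sigma>\<in>S. card (meet \<pi> \<sigma>) = 6} = 18
       \<and> card {\<sigma>\<in>S. card (meet \<pi> \<sigma>) = 5} = 15"
proof -
  have "\<pi> \<in> P33" using assms(1,3) unfolding independent33_def by blast
  then obtain g where g: "g permutes {1..9}" "relabel g \<pi> = pi0"
    using P33_relabel_transitive pi0_P33 by blast
  have inj: "inj g" using permutes_inj[OF g(1)] .
  have "independent33 (relabel g ` S)" by (rule independent33_relabel[OF g(1) assms(1)])
  moreover have "card (relabel g ` S) = 70"
    using card_image[OF inj_on_subset[OF inj_relabel[OF inj] subset_UNIV]] assms(2) by simp
  moreover have "pi0 \<in> relabel g ` S" using assms(3) g(2) by blast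
  ultimately have "card {\<sigma> \<in> relabel g ` S. card (meet pi0 \<sigma>) = 7} = 36
       \<and> card {\<sigma> \<in> relabel g ` S. card (meet pi0 \<sigma>) = 6} = 18
       \<and> card {\<sigma> \<in> relabel g ` S. card (meet pi0 \<sigma>) = 5} = 15"
    by (rule meet_counts_pi0)
  then show ?thesis unfolding g(2)[symmetric] card_meet_class_relabel[OF inj] .
qed

end
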